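(* Let $n\ge1$, $1\le q,q_1,q_2\le\infty$ and $s,s_1,s_2\in\mathbb{R}$. If $\mathbb{L}(q_1,s_1)\ast\mathbb{L}(q_2,s_2)\subset\mathbb{L}(q,s)$, then $l(q_1,s_1)\ast l(q_2,s_2)\subset l(q,s)$.
   Context: For $1\le p\le\infty$, $s\in\mathbb{R}$: $\mathbb{L}(p,s)$ is the space of measurable $f$ on $\mathbb{R}^n$ with $\|f\|_{\mathbb{L}(p,s)}=\big(\int|f(x)|^p|x|^{ps}dx\big)^{1/p}<\infty$ (ess sup of $|f(x)||x|^s$ if $p=\infty$); $l(p,s)$ is the space of $a:\mathbb{Z}^n\to\mathbb{C}$ with $\|a\|_{l(p,s)}=\big(\sum_k|a(k)|^p\langle k\rangle^{ps}\big)^{1/p}<\infty$ (sup of $|a(k)|\langle k\rangle^s$ if $p=\infty$), $\langle k\rangle=(1+|k|^2)^{1/2}$. Convolutions: $(f\ast g)(x)=\int f(x-y)g(y)dy$ on $\mathbb{R}^n$ and $(a\ast b)(k)=\sum_j a(k-j)b(j)$ on $\mathbb{Z}^n$. "$X\ast Y\subset Z$" means there is $C$ with $f\ast g\in Z$ and $\|f\ast g\|_Z\le C\|f\|_X\|g\|_Y$ for all $f\in X$, $g\in Y$. *)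

theory Defs
  imports "HOL-Analysis.Analysis" "HOL-Probability.Essential_Supremum"
begin

text \<open>Exponents p with 1 \<le> p \<le> \<infinity> are represented as extended reals.
  R^n is real^'n, Z^n is int^'n, for a finite index type 'n (n = CARD('n) \<ge> 1).\<close>

definition Lw_integrand :: "ereal \<Rightarrow> real \<Rightarrow> (real^'n \<Rightarrow> complex) \<Rightarrow> real^'n \<Rightarrow> ennreal" where
  "Lw_integrand p s f x = ennreal (cmod (f x) powr real_of_ereal p * norm x powr (real_of_ereal p * s))"

definition Lw_sup :: "real \<Rightarrow> (real^'n \<Rightarrow> complex) \<Rightarrow> ereal" where
  "Lw_sup s f = esssup lebesgue (\<lambda>x. ereal (cmod (f x) * norm x powr s))"

definition in_Lw :: "ereal \<Rightarrow> real \<Rightarrow> (real^'n \<Rightarrow> complex) \<Rightarrow> bool" where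
  "in_Lw p s f \<longleftrightarrow> f \<in> borel_measurable lebesgue \<and>
     (if p = \<infinity> then Lw_sup s f < \<infinity>
      else (\<integral>\<^sup>+ x. Lw_integrand p s f x \<partial>lebesgue) < \<infinity>)"

definition Lw_norm :: "ereal \<Rightarrow> real \<Rightarrow> (real^'n \<Rightarrow> complex) \<Rightarrow> real" where
  "Lw_norm p s f = (if p = \<infinity> then real_of_ereal (Lw_sup s f)
     else (enn2real (\<integral>\<^sup>+ x. Lw_integrand p s f x \<partial>lebesgue)) powr (1 / real_of_ereal p))"

definition convR :: "(real^'n \<Rightarrow> complex) \<Rightarrow> (real^'n \<Rightarrow> complex) \<Rightarrow> real^'n \<Rightarrow> complex" where
  "convR f g x = (LINT y|lebesgue. f (x - y) * g y)"

definition convR_defined :: "(real^'n \<Rightarrow> complex) \<Rightarrow> (real^'n \<Rightarrow> complex) \<Rightarrow> bool" where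
  "convR_defined f g \<longleftrightarrow> (AE x in lebesgue. integrable lebesgue (\<lambda>y. f (x - y) * g y))"

definition convR_incl :: "'n::finite itself \<Rightarrow> ereal \<Rightarrow> real \<Rightarrow> ereal \<Rightarrow> real \<Rightarrow> ereal \<Rightarrow> real \<Rightarrow> bool" where
  "convR_incl _ p1 s1 p2 s2 p s \<longleftrightarrow> (\<exists>C. \<forall>(f::real^'n \<Rightarrow> complex) g.
     in_Lw p1 s1 f \<longrightarrow> in_Lw p2 s2 g \<longrightarrow>
       convR_defined f g \<and> in_Lw p s (convR f g) \<and>
       Lw_norm p s (convR f g) \<le> C * Lw_norm p1 s1 f * Lw_norm p2 s2 g)"

definition jbr :: "int^'n \<Rightarrow> real" where
  "jbr k = sqrt (1 + (\<Sum>i\<in>UNIV. (real_of_int (k $ i))\<^sup>2))"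

definition lw_term :: "ereal \<Rightarrow> real \<Rightarrow> (int^'n \<Rightarrow> complex) \<Rightarrow> int^'n \<Rightarrow> real" where
  "lw_term p s a k = cmod (a k) powr real_of_ereal p * jbr k powr (real_of_ereal p * s)"

definition lw_sup :: "real \<Rightarrow> (int^'n \<Rightarrow> complex) \<Rightarrow> ereal" where
  "lw_sup s a = (SUP k. ereal (cmod (a k) * jbr k powr s))"

definition in_lw :: "ereal \<Rightarrow> real \<Rightarrow> (int^'n \<Rightarrow> complex) \<Rightarrow> bool" where
  "in_lw p s a \<longleftrightarrow> (if p = \<infinity> then lw_sup s a < \<infinity> else lw_term p s a summable_on UNIV)"

definition lw_norm :: "ereal \<Rightarrow> real \<Rightarrow> (int^'n \<Rightarrow> complex) \<Rightarrow> real" where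
  "lw_norm p s a = (if p = \<infinity> then real_of_ereal (lw_sup s a)
     else (infsum (lw_term p s a) UNIV) powr (1 / real_of_ereal p))"

definition convZ :: "(int^'n \<Rightarrow> complex) \<Rightarrow> (int^'n \<Rightarrow> complex) \<Rightarrow> int^'n \<Rightarrow> complex" where
  "convZ a b k = infsum (\<lambda>j. a (k - j) * b j) UNIV"

definition convZ_defined :: "(int^'n \<Rightarrow> complex) \<Rightarrow> (int^'n \<Rightarrow> complex) \<Rightarrow> bool" where
  "convZ_defined a b \<longleftrightarrow> (\<forall>k. (\<lambda>j. a (k - j) * b j) summable_on UNIV)"

definition convZ_incl :: "'n::finite itself \<Rightarrow> ereal \<Rightarrow> real \<Rightarrow> ereal \<Rightarrow> real \<Rightarrow> ereal \<Rightarrow> real \<Rightarrow> bool" where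
  "convZ_incl _ p1 s1 p2 s2 p s \<longleftrightarrow> (\<exists>C. \<forall>(a::int^'n \<Rightarrow> complex) b.
     in_lw p1 s1 a \<longrightarrow> in_lw p2 s2 b \<longrightarrow>
       convZ_defined a b \<and> in_lw p s (convZ a b) \<and>
       lw_norm p s (convZ a b) \<le> C * lw_norm p1 s1 a * lw_norm p2 s2 b)"

end

theory Submission
  imports Defs
begin

text \<open>Transplant a sequence a on Z^n to R^n as the sum of bumps a(k) 1_B(c_k, 1/4) around the
  points c_k = 3k + e of a dilated, shifted lattice. On these balls |x| is comparable with <k>, so
  the L(p,s) norm of the bump sum is at most a constant times the l(p,s) norm of a. Since
  c_k + c_j = 3(k + j) + 2e, near 3m + 2e the continuous convolution of two bump sums is the discrete
  convolution (a * b)(m) times the volume of the overlap of two balls, which is bounded below.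
  So the continuous inequality yields the discrete one for finitely supported sequences; truncating
  |a| and |b| to boxes and passing to the limit (Fatou's lemma in l(q,s)) removes finiteness.\<close>

section \<open>Lattice centres\<close>

definition of_int_vec :: "int^'n \<Rightarrow> real^'n" where
  "of_int_vec k = (\<chi> i. real_of_int (k $ i))"

lemma of_int_vec_diff: "of_int_vec (k - j) = of_int_vec k - of_int_vec j"
  by (simp add: of_int_vec_def vec_eq_iff)

lemma norm_of_int_vec_ge_1:
  assumes "k \<noteq> 0"
  shows "1 \<le> norm (of_int_vec k)"
proof -
  obtain i where "k $ i \<noteq> 0" using assms by (auto simp: vec_eq_iff)
  hence "1 \<le> \<bar>real_of_int (k $ i)\<bar>" by linarith
  also have "\<dots> = \<bar>of_int_vec k $ i\<bar>" by (simp add: of_int_vec_def)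
  also have "\<dots> \<le> norm (of_int_vec k)" by (rule component_le_norm_cart)
  finally show ?thesis .
qed

lemma jbr_eq_norm: "jbr k = sqrt (1 + (norm (of_int_vec k))\<^sup>2)"
  by (simp add: jbr_def norm_vec_def L2_set_def of_int_vec_def sum_nonneg)

lemma jbr_ge_1: "1 \<le> jbr k"
  by (simp add: jbr_eq_norm)

lemma jbr_pos: "0 < jbr k"
  using jbr_ge_1[of k] by linarith

lemma norm_of_int_vec_le_jbr: "norm (of_int_vec k) \<le> jbr k"
  by (simp add: jbr_eq_norm real_le_rsqrt)

lemma jbr_le_1_plus_norm: "jbr k \<le> 1 + norm (of_int_vec k)"
proof -
  have "1 + (norm (of_int_vec k))\<^sup>2 \<le> (1 + norm (of_int_vec k))\<^sup>2"
    by (simp add: power2_eq_square algebra_simps)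
  thus ?thesis by (simp add: jbr_eq_norm real_le_lsqrt)
qed

text \<open>The lattice points are spread out by the factor 3 so that small balls around distinct
  centres are disjoint, and shifted along a coordinate axis (any fixed index will do) so that
  these balls stay at distance \<open>\<ge> 1/2\<close> from the origin, where the weight \<open>|x|^s\<close> degenerates.
  Centres with offset 1 carry the bumps; their sums are the centres with offset 2.\<close>

definition lattice_centre :: "real \<Rightarrow> int^'n \<Rightarrow> real^'n" where
  "lattice_centre w k = 3 *\<^sub>R of_int_vec k + w *\<^sub>R axis undefined 1"

lemma lattice_centre_add: "lattice_centre 1 k + lattice_centre 1 j = lattice_centre 2 (k + j)"
  by (simp add: lattice_centre_def of_int_vec_def axis_def vec_eq_iff)

lemma lattice_centre_eq_if_dist_less:
  assumes "dist (lattice_centre w k) (lattice_centre w k') < 3"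
  shows "k = k'"
proof (rule ccontr)
  assume "k \<noteq> k'"
  hence "1 \<le> norm (of_int_vec (k - k'))" by (intro norm_of_int_vec_ge_1) auto
  moreover have "dist (lattice_centre w k) (lattice_centre w k') = 3 * norm (of_int_vec (k - k'))"
    by (simp add: lattice_centre_def dist_norm of_int_vec_diff algebra_simps
        flip: scaleR_diff_right)
  ultimately show False using assms by linarith
qed

lemma lattice_centre_balls_disjoint:
  assumes "x \<in> ball (lattice_centre w k) r" "x \<in> ball (lattice_centre w k') r" "r \<le> 3/2"
  shows "k = k'"
  using assms dist_triangle[of "lattice_centre w k" "lattice_centre w k'" x]
  by (intro lattice_centre_eq_if_dist_less[of w]) (auto simp: dist_commute)

lemma norm_near_lattice_centre:
  assumes w: "w = 1 \<or> w = 2" and x: "dist x (lattice_centre w k) < 1/2"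
  shows "jbr k / 8 \<le> norm x \<and> norm x \<le> 6 * jbr k"
proof -
  let ?i = "undefined :: 'n" and ?c = "lattice_centre w k"
  have ci: "?c $ ?i = 3 * real_of_int (k $ ?i) + w"
    by (simp add: lattice_centre_def of_int_vec_def axis_def)
  have "1 \<le> \<bar>3 * real_of_int (k $ ?i) + w\<bar>"
    using w by (cases "k $ ?i \<ge> 0") auto
  moreover have "\<bar>(x - ?c) $ ?i\<bar> < 1/2"
    using x component_le_norm_cart[of "x - ?c" ?i] by (simp add: dist_norm)
  ultimately have "1/2 \<le> \<bar>x $ ?i\<bar>" using ci by (simp, smt (verit))
  hence lower: "1/2 \<le> norm x" using component_le_norm_cart[of x ?i] by simp
  have "norm (w *\<^sub>R axis ?i (1::real)) \<le> 2" using w by auto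
  hence "norm ?c \<le> 3 * norm (of_int_vec k) + 2" "3 * norm (of_int_vec k) - 2 \<le> norm ?c"
    unfolding lattice_centre_def
    using norm_triangle_ineq[of "3 *\<^sub>R of_int_vec k" "w *\<^sub>R axis ?i 1"]
      norm_diff_ineq[of "3 *\<^sub>R of_int_vec k" "w *\<^sub>R axis ?i 1"] by auto
  moreover have "norm x \<le> norm ?c + 1/2" "norm ?c - 1/2 \<le> norm x"
    using x norm_triangle_ineq2[of x ?c] norm_triangle_ineq3[of x ?c]
    by (auto simp: dist_norm norm_minus_commute)
  ultimately show ?thesis
    using lower jbr_le_1_plus_norm[of k] norm_of_int_vec_le_jbr[of k] jbr_ge_1[of k] by auto
qed

lemma powr_le_if_ratio_bounded:
  fixes c \<rho> t :: real
  assumes "1 \<le> c" "1/c \<le> \<rho>" "\<rho> \<le> c"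
  shows "c powr (-\<bar>t\<bar>) \<le> \<rho> powr t \<and> \<rho> powr t \<le> c powr \<bar>t\<bar>"
proof -
  have "0 < \<rho>" using assms by (smt (verit) divide_pos_pos)
  have "ln (1/c) \<le> ln \<rho>" "ln \<rho> \<le> ln c" using assms \<open>0 < \<rho>\<close> by (simp_all del: ln_div)
  moreover have "ln (1/c) = - ln c" using assms by (simp add: ln_div)
  ultimately have "\<bar>t * ln \<rho>\<bar> \<le> \<bar>t\<bar> * ln c" by (simp add: abs_mult mult_left_mono)
  hence "- \<bar>t\<bar> * ln c \<le> t * ln \<rho> \<and> t * ln \<rho> \<le> \<bar>t\<bar> * ln c" by auto
  thus ?thesis using \<open>0 < \<rho>\<close> assms by (simp add: powr_def)
qed

lemma norm_powr_near_lattice_centre: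
  assumes "w = 1 \<or> w = 2" and "dist x (lattice_centre w k) < 1/2"
  shows "48 powr (-\<bar>t\<bar>) * jbr k powr t \<le> norm x powr t
    \<and> norm x powr t \<le> 48 powr \<bar>t\<bar> * jbr k powr t"
proof -
  define \<rho> where "\<rho> = norm x / jbr k"
  have "1/48 \<le> \<rho>" "\<rho> \<le> 48"
    using norm_near_lattice_centre[OF assms] jbr_pos[of k] by (auto simp: \<rho>_def field_simps)
  note bounds = powr_le_if_ratio_bounded[OF _ this, of t]
  have "norm x powr t = jbr k powr t * \<rho> powr t"
    using jbr_pos[of k] \<open>1/48 \<le> \<rho>\<close> by (simp add: \<rho>_def powr_divide)
  thus ?thesis using bounds jbr_pos[of k] by (simp add: mult.commute)
qed

section \<open>Weighted sequence spaces\<close>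

lemma real_of_ereal_ge_1: "1 \<le> p \<Longrightarrow> p \<noteq> \<infinity> \<Longrightarrow> 1 \<le> real_of_ereal p"
  by (cases p) auto

lemma lw_term_nonneg: "0 \<le> lw_term p t a k"
  by (simp add: lw_term_def)

lemma lw_term_eq_powr:
  "0 < real_of_ereal p \<Longrightarrow> lw_term p t a k = (cmod (a k) * jbr k powr t) powr real_of_ereal p"
  using jbr_pos[of k] by (simp add: lw_term_def powr_mult powr_powr mult.commute)

lemma lw_sup_nonneg: "0 \<le> lw_sup t a"
  unfolding lw_sup_def by (rule order_trans[OF _ SUP_upper[of 0]]) auto

lemma lw_norm_nonneg: "0 \<le> lw_norm p t a"
  using lw_sup_nonneg[of t a]
  by (cases "lw_sup t a") (auto simp: lw_norm_def)

lemma lw_norm_finite_eq: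
  "p \<noteq> \<infinity> \<Longrightarrow> 0 < real_of_ereal p
    \<Longrightarrow> lw_norm p t a powr real_of_ereal p = infsum (lw_term p t a) UNIV"
  by (simp add: lw_norm_def powr_powr infsum_nonneg lw_term_nonneg)

lemma lw_weight_le_lw_norm:
  assumes p: "1 \<le> p" and a: "in_lw p t a"
  shows "cmod (a k) * jbr k powr t \<le> lw_norm p t a"
proof (cases "p = \<infinity>")
  case True
  have "ereal (cmod (a k) * jbr k powr t) \<le> lw_sup t a"
    unfolding lw_sup_def by (rule SUP_upper) simp
  moreover have "lw_sup t a < \<infinity>" using a True by (simp add: in_lw_def)
  ultimately show ?thesis using True by (cases "lw_sup t a") (auto simp: lw_norm_def)
next
  case False
  define pr where "pr = real_of_ereal p"
  have pr: "1 \<le> pr" using real_of_ereal_ge_1[OF p False] by (simp add: pr_def)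
  have summable: "lw_term p t a summable_on UNIV" using a False by (simp add: in_lw_def)
  hence "lw_term p t a k \<le> infsum (lw_term p t a) UNIV"
    using finite_sum_le_infsum[OF summable, of "{k}"] lw_term_nonneg by auto
  hence "(cmod (a k) * jbr k powr t) powr pr \<le> lw_norm p t a powr pr"
    using pr False by (simp add: lw_term_eq_powr lw_norm_finite_eq pr_def)
  thus ?thesis using pr lw_norm_nonneg[of p t a] by (smt (verit) powr_less_mono2)
qed

lemma sum_lw_term_le_lw_norm_powr:
  assumes p: "1 \<le> p" "p \<noteq> \<infinity>" and a: "in_lw p t a" and M: "finite M"
  shows "(\<Sum>m\<in>M. lw_term p t a m) \<le> lw_norm p t a powr real_of_ereal p"
proof -
  have summable: "lw_term p t a summable_on UNIV" using a p by (simp add: in_lw_def)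
  hence "(\<Sum>m\<in>M. lw_term p t a m) \<le> infsum (lw_term p t a) UNIV"
    using finite_sum_le_infsum[OF summable M] lw_term_nonneg by auto
  thus ?thesis using p real_of_ereal_ge_1[OF p] by (simp add: lw_norm_finite_eq)
qed

lemma in_lw_finite_support:
  assumes F: "finite F" and a0: "\<And>k. k \<notin> F \<Longrightarrow> a k = 0" and p: "1 \<le> p"
  shows "in_lw p t a"
proof (cases "p = \<infinity>")
  case True
  have "lw_sup t a \<le> ereal (\<Sum>k\<in>F. cmod (a k) * jbr k powr t)"
    unfolding lw_sup_def
  proof (rule SUP_least)
    fix k
    show "ereal (cmod (a k) * jbr k powr t) \<le> ereal (\<Sum>k\<in>F. cmod (a k) * jbr k powr t)"
      using F a0[of k] by (cases "k \<in> F") (auto intro: member_le_sum sum_nonneg)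
  qed
  thus ?thesis using True by (auto simp: in_lw_def)
next
  case False
  have "0 < real_of_ereal p" using real_of_ereal_ge_1[OF p False] by simp
  hence "lw_term p t a summable_on UNIV \<longleftrightarrow> lw_term p t a summable_on F"
    by (intro summable_on_cong_neutral) (use a0 in \<open>auto simp: lw_term_def\<close>)
  thus ?thesis using F False by (simp add: in_lw_def)
qed

lemma lw_norm_finite_support:
  assumes F: "finite F" and a0: "\<And>k. k \<notin> F \<Longrightarrow> a k = 0" and p: "1 \<le> p" "p \<noteq> \<infinity>"
  shows "lw_norm p t a = (\<Sum>k\<in>F. lw_term p t a k) powr (1 / real_of_ereal p)"
proof -
  have "0 < real_of_ereal p" using real_of_ereal_ge_1[OF p] by simp
  hence "infsum (lw_term p t a) UNIV = infsum (lw_term p t a) F"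
    by (intro infsum_cong_neutral) (use a0 in \<open>auto simp: lw_term_def\<close>)
  thus ?thesis using F p by (simp add: lw_norm_def)
qed

lemma lw_norm_dominated:
  assumes p: "1 \<le> p" and a: "in_lw p t a" and le: "\<And>k. cmod (b k) \<le> cmod (a k)"
  shows "in_lw p t b \<and> lw_norm p t b \<le> lw_norm p t a"
proof (cases "p = \<infinity>")
  case True
  have "lw_sup t b \<le> lw_sup t a"
    unfolding lw_sup_def by (rule SUP_mono') (use le in \<open>auto intro!: mult_right_mono\<close>)
  moreover have "lw_sup t a < \<infinity>" using a True by (simp add: in_lw_def)
  ultimately show ?thesis using True lw_sup_nonneg[of t b] unfolding in_lw_def lw_norm_def
    by (cases "lw_sup t b"; cases "lw_sup t a") auto
next
  case False
  define pr where "pr = real_of_ereal p"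
  have pr: "1 \<le> pr" using real_of_ereal_ge_1[OF p False] by (simp add: pr_def)
  have term_le: "lw_term p t b k \<le> lw_term p t a k" for k
    using le[of k] pr unfolding lw_term_def pr_def[symmetric]
    by (intro mult_right_mono powr_mono2) auto
  have sa: "lw_term p t a summable_on UNIV" using a False by (simp add: in_lw_def)
  have sb: "lw_term p t b summable_on UNIV"
    by (rule summable_on_comparison_test[OF sa term_le lw_term_nonneg])
  have "infsum (lw_term p t b) UNIV \<le> infsum (lw_term p t a) UNIV"
    by (rule infsum_mono[OF sb sa term_le])
  hence "infsum (lw_term p t b) UNIV powr (1/pr) \<le> infsum (lw_term p t a) UNIV powr (1/pr)"
    using pr by (intro powr_mono2) (auto intro!: infsum_nonneg lw_term_nonneg)
  thus ?thesis using False sb by (simp add: in_lw_def lw_norm_def pr_def)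
qed

lemma lw_norm_le_if_tendsto:
  assumes p: "1 \<le> p"
    and c: "\<And>N. in_lw p t (c N)" and bound: "\<And>N. lw_norm p t (c N) \<le> R"
    and lim: "\<And>k. (\<lambda>N. cmod (c N k)) \<longlonglongrightarrow> cmod (d k)"
  shows "in_lw p t d \<and> lw_norm p t d \<le> R"
proof -
  have R: "0 \<le> R" using lw_norm_nonneg bound order_trans by blast
  have weight_le: "cmod (d k) * jbr k powr t \<le> R" for k
  proof (rule LIMSEQ_le_const2)
    show "(\<lambda>N. cmod (c N k) * jbr k powr t) \<longlonglongrightarrow> cmod (d k) * jbr k powr t"
      by (intro tendsto_mult_right lim)
    show "\<exists>N0. \<forall>N\<ge>N0. cmod (c N k) * jbr k powr t \<le> R"
      using lw_weight_le_lw_norm[OF p c] bound order_trans by blast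
  qed
  show ?thesis
  proof (cases "p = \<infinity>")
    case True
    have "lw_sup t d \<le> ereal R" unfolding lw_sup_def by (rule SUP_least) (simp add: weight_le)
    thus ?thesis using True lw_sup_nonneg[of t d] unfolding in_lw_def lw_norm_def
      by (cases "lw_sup t d") auto
  next
    case False
    define pr where "pr = real_of_ereal p"
    have pr: "1 \<le> pr" using real_of_ereal_ge_1[OF p False] by (simp add: pr_def)
    have partial_le: "(\<Sum>m\<in>M. lw_term p t d m) \<le> R powr pr" if M: "finite M" for M
    proof (rule LIMSEQ_le_const2)
      show "(\<lambda>N. \<Sum>m\<in>M. lw_term p t (c N) m) \<longlonglongrightarrow> (\<Sum>m\<in>M. lw_term p t d m)"
        unfolding lw_term_def pr_def[symmetric] using pr
        by (intro tendsto_sum tendsto_mult_right tendsto_powr' lim tendsto_const) auto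
      have "(\<Sum>m\<in>M. lw_term p t (c N) m) \<le> R powr pr" for N
        using sum_lw_term_le_lw_norm_powr[OF p False c M] bound[of N] lw_norm_nonneg pr
        by (smt (verit) pr_def powr_mono2)
      thus "\<exists>N0. \<forall>N\<ge>N0. (\<Sum>m\<in>M. lw_term p t (c N) m) \<le> R powr pr" by blast
    qed
    have summable: "lw_term p t d summable_on UNIV"
      by (rule nonneg_bdd_above_summable_on)
        (auto intro!: bdd_aboveI[of _ "R powr pr"] partial_le lw_term_nonneg)
    have "infsum (lw_term p t d) UNIV \<le> R powr pr"
      by (rule infsum_le_finite_sums[OF summable]) (rule partial_le)
    hence "lw_norm p t d powr pr \<le> R powr pr"
      using False pr by (simp add: lw_norm_finite_eq pr_def)
    thus ?thesis using False summable pr R lw_norm_nonneg[of p t d]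
      by (simp add: in_lw_def) (smt (verit) powr_less_mono2)
  qed
qed

section \<open>Weighted function spaces\<close>

definition ball_vol :: "'n::finite itself \<Rightarrow> real \<Rightarrow> real" where
  "ball_vol _ r = unit_ball_vol (real CARD('n)) * r ^ CARD('n)"

lemma emeasure_ball_vol:
  "0 \<le> r \<Longrightarrow> emeasure lborel (ball (c::real^'n::finite) r) = ennreal (ball_vol TYPE('n) r)"
  by (simp add: emeasure_ball ball_vol_def)

lemma ball_vol_pos: "0 < r \<Longrightarrow> 0 < ball_vol TYPE('n::finite) r"
  by (simp add: ball_vol_def unit_ball_vol_def)

lemma esssup_ge_if_pos_measure:
  fixes f :: "'a \<Rightarrow> ereal"
  assumes D: "D \<in> sets M" "0 < emeasure M D" and ge: "\<And>x. x \<in> D \<Longrightarrow> c \<le> f x"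
  shows "c \<le> esssup M f"
proof (rule ccontr)
  assume "\<not> c \<le> esssup M f"
  hence "esssup M f < c" by simp
  have "AE x in M. x \<notin> D"
    using esssup_AE[of f M]
  proof (rule eventually_mono)
    fix x assume "f x \<le> esssup M f"
    thus "x \<notin> D" using ge[of x] \<open>esssup M f < c\<close> by (metis leD order.strict_trans1)
  qed
  moreover have "{x \<in> space M. \<not> x \<notin> D} = D" using sets.sets_into_space[OF D(1)] by auto
  ultimately have "emeasure M D = 0" using AE_iff_measurable[OF D(1)] by simp
  thus False using D(2) by simp
qed

lemma nn_integral_ge_sum_disjoint:
  fixes c :: "'i \<Rightarrow> ennreal"
  assumes M: "finite M" and D: "\<And>m. m \<in> M \<Longrightarrow> D m \<in> sets N"
    and disj: "\<And>m m' x. m \<in> M \<Longrightarrow> m' \<in> M \<Longrightarrow> x \<in> D m \<Longrightarrow> x \<in> D m' \<Longrightarrow> m = m'"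
    and le: "\<And>m x. m \<in> M \<Longrightarrow> x \<in> D m \<Longrightarrow> c m \<le> h x"
  shows "(\<Sum>m\<in>M. c m * emeasure N (D m)) \<le> (\<integral>\<^sup>+ x. h x \<partial>N)"
proof -
  have pointwise: "(\<Sum>m\<in>M. c m * indicator (D m) x) \<le> h x" for x
  proof (cases "\<exists>m0\<in>M. x \<in> D m0")
    case True
    then obtain m0 where m0: "m0 \<in> M" "x \<in> D m0" by blast
    have "(\<Sum>m\<in>M - {m0}. c m * indicator (D m) x) = 0"
      using disj[OF _ m0(1) _ m0(2)] by (intro sum.neutral) (auto split: split_indicator)
    thus ?thesis using m0 le[OF m0] by (simp add: sum.remove[OF M m0(1)])
  qed auto
  have "(\<Sum>m\<in>M. c m * emeasure N (D m)) = (\<integral>\<^sup>+ x. (\<Sum>m\<in>M. c m * indicator (D m) x) \<partial>N)"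
    using D by (simp add: nn_integral_sum nn_integral_cmult_indicator)
  also have "\<dots> \<le> (\<integral>\<^sup>+ x. h x \<partial>N)"
    by (intro nn_integral_mono pointwise)
  finally show ?thesis .
qed

lemma Lw_sup_nonneg: "0 \<le> Lw_sup s (f :: real^'n::finite \<Rightarrow> complex)"
  unfolding Lw_sup_def zero_ereal_def
  by (rule esssup_ge_if_pos_measure[of "ball 0 1"]) (auto simp: emeasure_ball_vol ball_vol_pos)

lemma Lw_norm_nonneg: "0 \<le> Lw_norm p s (f :: real^'n::finite \<Rightarrow> complex)"
  using Lw_sup_nonneg[of s f] by (cases "Lw_sup s f") (auto simp: Lw_norm_def)

lemma Lw_norm_le_if_nn_integral_le:
  assumes "1 \<le> p" "p \<noteq> \<infinity>" "f \<in> borel_measurable lebesgue" "0 \<le> B"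
    and "(\<integral>\<^sup>+ x. Lw_integrand p s f x \<partial>lebesgue) \<le> ennreal B"
  shows "in_Lw p s f \<and> Lw_norm p s f \<le> B powr (1 / real_of_ereal p)"
proof -
  have "(\<integral>\<^sup>+ x. Lw_integrand p s f x \<partial>lebesgue) < \<infinity>"
    using assms(5) le_less_trans by fastforce
  moreover have "enn2real (\<integral>\<^sup>+ x. Lw_integrand p s f x \<partial>lebesgue) \<le> B"
    using enn2real_mono[OF assms(5)] assms(4) by simp
  ultimately show ?thesis using assms(2,3) real_of_ereal_ge_1[OF assms(1,2)]
    by (auto simp: in_Lw_def Lw_norm_def intro!: powr_mono2)
qed

lemma Lw_norm_powr_ge_if_nn_integral_ge:
  assumes "p \<noteq> \<infinity>" "0 < real_of_ereal p" "in_Lw p s f" "0 \<le> B"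
    and "ennreal B \<le> (\<integral>\<^sup>+ x. Lw_integrand p s f x \<partial>lebesgue)"
  shows "B \<le> Lw_norm p s f powr real_of_ereal p"
proof -
  have "(\<integral>\<^sup>+ x. Lw_integrand p s f x \<partial>lebesgue) < \<infinity>"
    using assms(1,3) by (simp add: in_Lw_def)
  hence "B \<le> enn2real (\<integral>\<^sup>+ x. Lw_integrand p s f x \<partial>lebesgue)"
    using enn2real_mono[OF assms(5)] assms(4) by simp
  thus ?thesis using assms(1,2) by (simp add: Lw_norm_def powr_powr)
qed

lemma borel_measurable_Lw_weight:
  "f \<in> borel_measurable lebesgue
    \<Longrightarrow> (\<lambda>x. ereal (cmod (f x) * norm x powr s)) \<in> borel_measurable (lebesgue :: (real^'n::finite) measure)"
proof -
  have "(\<lambda>x::real^'n. x) \<in> borel_measurable lebesgue"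
    using measurable_completion[of "\<lambda>x. x" lborel borel] by simp
  moreover assume "f \<in> borel_measurable lebesgue"
  ultimately show ?thesis by measurable
qed

lemma Lw_norm_inf_le:
  assumes f: "f \<in> borel_measurable lebesgue" and "0 \<le> B"
    and bound: "\<And>x. cmod (f x) * norm x powr s \<le> B"
  shows "in_Lw \<infinity> s (f :: real^'n::finite \<Rightarrow> complex) \<and> Lw_norm \<infinity> s f \<le> B"
proof -
  have "Lw_sup s f \<le> ereal B"
    unfolding Lw_sup_def by (intro esssup_I borel_measurable_Lw_weight f AE_I2) (simp add: bound)
  thus ?thesis using f Lw_sup_nonneg[of s f] unfolding in_Lw_def Lw_norm_def
    by (cases "Lw_sup s f") auto
qed

lemma Lw_norm_inf_ge:
  assumes f: "in_Lw \<infinity> s (f :: real^'n::finite \<Rightarrow> complex)"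
    and D: "D \<in> sets lebesgue" "0 < emeasure lebesgue D"
    and bound: "\<And>x. x \<in> D \<Longrightarrow> B \<le> cmod (f x) * norm x powr s"
  shows "B \<le> Lw_norm \<infinity> s f"
proof -
  have "ereal B \<le> Lw_sup s f"
    unfolding Lw_sup_def by (rule esssup_ge_if_pos_measure[OF D]) (simp add: bound)
  moreover have "Lw_sup s f < \<infinity>" using f by (simp add: in_Lw_def)
  ultimately show ?thesis by (cases "Lw_sup s f") (auto simp: Lw_norm_def)
qed

section \<open>Bump functions on the lattice\<close>

definition bump :: "(int^'n::finite \<Rightarrow> complex) \<Rightarrow> (int^'n) set \<Rightarrow> real^'n \<Rightarrow> complex" where
  "bump a F x = (\<Sum>k\<in>F. a k * indicator (ball (lattice_centre 1 k) (1/4)) x)"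

lemma ball_in_sets_lebesgue[measurable]: "ball c r \<in> sets lebesgue"
  by simp

lemma bump_measurable: "bump a F \<in> borel_measurable lebesgue"
  unfolding bump_def by measurable

lemma bump_eq_on_ball:
  assumes F: "finite F" "k0 \<in> F" and x: "x \<in> ball (lattice_centre 1 k0) (1/4)"
  shows "bump a F x = a k0"
proof -
  have "x \<notin> ball (lattice_centre 1 k) (1/4)" if "k \<in> F - {k0}" for k
    using lattice_centre_balls_disjoint[of x 1 k0 "1/4" k] x that by auto
  hence "(\<Sum>k\<in>F - {k0}. a k * indicator (ball (lattice_centre 1 k) (1/4)) x) = 0"
    by (intro sum.neutral) auto
  thus ?thesis using x unfolding bump_def sum.remove[OF F] by simp
qed

lemma bump_eq_0: "(\<And>k. k \<in> F \<Longrightarrow> x \<notin> ball (lattice_centre 1 k) (1/4)) \<Longrightarrow> bump a F x = 0"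
  unfolding bump_def by (intro sum.neutral) auto

lemma Lw_integrand_bump_le:
  fixes t :: real
  assumes F: "finite F" and p: "0 < real_of_ereal p"
  defines "K \<equiv> 48 powr \<bar>real_of_ereal p * t\<bar>"
  shows "Lw_integrand p t (bump a F) x
    \<le> (\<Sum>k\<in>F. ennreal (K * lw_term p t a k) * indicator (ball (lattice_centre 1 k) (1/4)) x)"
proof (cases "\<exists>k\<in>F. x \<in> ball (lattice_centre 1 k) (1/4)")
  case True
  then obtain k0 where k0: "k0 \<in> F" "x \<in> ball (lattice_centre 1 k0) (1/4)" by blast
  let ?pr = "real_of_ereal p"
  have "norm x powr (?pr * t) \<le> K * jbr k0 powr (?pr * t)"
    using norm_powr_near_lattice_centre[of 1 x k0 "?pr * t"] k0(2)
    by (simp add: K_def dist_commute)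
  hence "cmod (a k0) powr ?pr * norm x powr (?pr * t) \<le> cmod (a k0) powr ?pr * (K * jbr k0 powr (?pr * t))"
    by (rule mult_left_mono) simp
  also have "\<dots> = K * lw_term p t a k0" by (simp add: lw_term_def)
  finally have "cmod (a k0) powr ?pr * norm x powr (?pr * t) \<le> K * lw_term p t a k0" .
  hence "Lw_integrand p t (bump a F) x
      \<le> ennreal (K * lw_term p t a k0) * indicator (ball (lattice_centre 1 k0) (1/4)) x"
    using k0 by (simp add: Lw_integrand_def bump_eq_on_ball[OF F k0] ennreal_leI)
  also have "\<dots> \<le> (\<Sum>k\<in>F. ennreal (K * lw_term p t a k) * indicator (ball (lattice_centre 1 k) (1/4)) x)"
    by (rule member_le_sum) (use k0 F in auto)
  finally show ?thesis .
next
  case False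
  hence "bump a F x = 0" by (intro bump_eq_0) auto
  thus ?thesis using p by (simp add: Lw_integrand_def)
qed

lemma Lw_norm_bump_le:
  fixes t :: real and a :: "int^'n::finite \<Rightarrow> complex"
  assumes F: "finite F" and p: "1 \<le> p" "p \<noteq> \<infinity>"
  defines "pr \<equiv> real_of_ereal p"
  shows "in_Lw p t (bump a F) \<and> Lw_norm p t (bump a F)
    \<le> (48 powr \<bar>pr * t\<bar> * ball_vol TYPE('n) (1/4)) powr (1/pr) * (\<Sum>k\<in>F. lw_term p t a k) powr (1/pr)"
proof -
  define K where "K = 48 powr \<bar>pr * t\<bar>"
  define V where "V = ball_vol TYPE('n) (1/4)"
  have K: "0 \<le> K" and V: "0 \<le> V"
    using ball_vol_pos[of "1/4", where 'n='n] by (simp_all add: K_def V_def)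
  hence KV: "0 \<le> K * V" by simp
  have pr: "0 < pr" using real_of_ereal_ge_1[OF p] by (simp add: pr_def)
  have "(\<integral>\<^sup>+ x. Lw_integrand p t (bump a F) x \<partial>lebesgue)
      \<le> (\<integral>\<^sup>+ x. (\<Sum>k\<in>F. ennreal (K * lw_term p t a k) * indicator (ball (lattice_centre 1 k) (1/4)) x) \<partial>lebesgue)"
    using Lw_integrand_bump_le[OF F] pr by (intro nn_integral_mono) (simp add: K_def pr_def)
  also have "\<dots> = (\<Sum>k\<in>F. ennreal (K * lw_term p t a k) * ennreal V)"
    by (subst nn_integral_sum) (auto simp: nn_integral_cmult_indicator emeasure_ball_vol V_def)
  also have "\<dots> = (\<Sum>k\<in>F. ennreal (K * V * lw_term p t a k))"
    using K V by (intro sum.cong refl) (simp add: lw_term_nonneg mult_ac flip: ennreal_mult)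
  also have "\<dots> = ennreal (K * V * (\<Sum>k\<in>F. lw_term p t a k))"
    using K V by (simp add: sum_distrib_left lw_term_nonneg)
  finally have "in_Lw p t (bump a F)
      \<and> Lw_norm p t (bump a F) \<le> (K * V * (\<Sum>k\<in>F. lw_term p t a k)) powr (1/pr)"
    unfolding pr_def using KV
    by (intro Lw_norm_le_if_nn_integral_le[OF p bump_measurable]) (auto simp: lw_term_nonneg sum_nonneg)
  thus ?thesis using KV by (simp add: powr_mult K_def V_def lw_term_nonneg sum_nonneg)
qed

lemma Lw_norm_bump_le_inf:
  assumes F: "finite F" and B: "0 \<le> B"
    and bound: "\<And>k. k \<in> F \<Longrightarrow> cmod (a k) * jbr k powr t \<le> B"
  shows "in_Lw \<infinity> t (bump a F) \<and> Lw_norm \<infinity> t (bump a F) \<le> 48 powr \<bar>t\<bar> * B"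
proof (rule Lw_norm_inf_le[OF bump_measurable])
  fix x
  show "cmod (bump a F x) * norm x powr t \<le> 48 powr \<bar>t\<bar> * B"
  proof (cases "\<exists>k\<in>F. x \<in> ball (lattice_centre 1 k) (1/4)")
    case True
    then obtain k0 where k0: "k0 \<in> F" "x \<in> ball (lattice_centre 1 k0) (1/4)" by blast
    have "norm x powr t \<le> 48 powr \<bar>t\<bar> * jbr k0 powr t"
      using norm_powr_near_lattice_centre[of 1 x k0 t] k0(2) by (simp add: dist_commute)
    hence "cmod (a k0) * norm x powr t \<le> 48 powr \<bar>t\<bar> * (cmod (a k0) * jbr k0 powr t)"
      by (simp add: mult_left_mono mult.left_commute)
    also have "\<dots> \<le> 48 powr \<bar>t\<bar> * B" using bound[OF k0(1)] by simp
    finally show ?thesis using bump_eq_on_ball[OF F k0] by simp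
  next
    case False
    thus ?thesis using B by (simp add: bump_eq_0)
  qed
qed (use B in simp)

lemma bump_Lw_norm_bound:
  assumes p: "1 \<le> p"
  shows "\<exists>U\<ge>0. \<forall>(a :: int^'n::finite \<Rightarrow> complex) F. finite F \<longrightarrow> (\<forall>k. k \<notin> F \<longrightarrow> a k = 0) \<longrightarrow>
    in_Lw p t (bump a F) \<and> Lw_norm p t (bump a F) \<le> U * lw_norm p t a"
proof (cases "p = \<infinity>")
  case True
  have "in_Lw \<infinity> t (bump a F) \<and> Lw_norm \<infinity> t (bump a F) \<le> 48 powr \<bar>t\<bar> * lw_norm p t a"
    if "finite F" "\<forall>k. k \<notin> F \<longrightarrow> a k = 0" for a :: "int^'n \<Rightarrow> complex" and F
  proof (intro Lw_norm_bump_le_inf lw_norm_nonneg)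
    have "in_lw p t a" using that p by (intro in_lw_finite_support) auto
    thus "cmod (a k) * jbr k powr t \<le> lw_norm p t a" for k by (rule lw_weight_le_lw_norm[OF p])
  qed (use that in simp)
  thus ?thesis using True by (intro exI[of _ "48 powr \<bar>t\<bar>"]) auto
next
  case False
  define pr where "pr = real_of_ereal p"
  define U where "U = (48 powr \<bar>pr * t\<bar> * ball_vol TYPE('n) (1/4)) powr (1/pr)"
  have "in_Lw p t (bump a F) \<and> Lw_norm p t (bump a F) \<le> U * lw_norm p t a"
    if "finite F" "\<forall>k. k \<notin> F \<longrightarrow> a k = 0" for a :: "int^'n \<Rightarrow> complex" and F
    using Lw_norm_bump_le[OF that(1) p False, of t a] lw_norm_finite_support[of F a p t] that p False
    by (simp add: U_def pr_def)
  thus ?thesis by (intro exI[of _ U]) (simp add: U_def)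
qed

section \<open>Convolution of bump functions\<close>

definition ball_overlap :: "real^'n::finite \<Rightarrow> real" where
  "ball_overlap u = measure lebesgue (ball 0 (1/4) \<inter> ball u (1/4))"

lemma ball_overlap_eq_0:
  assumes "1/2 \<le> norm u"
  shows "ball_overlap u = 0"
proof -
  have "ball 0 (1/4) \<inter> ball u (1/4) = {}"
  proof (rule ccontr)
    assume "ball 0 (1/4) \<inter> ball u (1/4) \<noteq> {}"
    then obtain z where "norm z < 1/4" "dist u z < 1/4" by auto
    hence "norm u < 1/2" using norm_triangle_ineq[of "u - z" z] by (auto simp: dist_norm)
    thus False using assms by simp
  qed
  thus ?thesis by (simp add: ball_overlap_def)
qed

lemma ball_overlap_ge:
  assumes "norm (u::real^'n::finite) < 1/8"
  shows "ball_vol TYPE('n) (1/8) \<le> ball_overlap u"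
proof -
  have "ball 0 (1/8) \<subseteq> ball 0 (1/4) \<inter> ball u (1/4)"
    using assms norm_triangle_ineq4[of u] by (auto simp: dist_norm) (smt (verit) norm_triangle_ineq4)
  hence "measure lebesgue (ball (0::real^'n) (1/8)) \<le> ball_overlap u"
    unfolding ball_overlap_def
    by (intro measure_mono_fmeasurable) (auto intro!: lmeasurable_open bounded_Int)
  thus ?thesis using emeasure_ball_vol[of "1/8" "0::real^'n"] ball_vol_pos[of "1/8", where 'n='n]
    by (simp add: measure_def)
qed

lemma indicator_ball_diff:
  "indicator (ball c r) (x - y) = (indicator (ball (x - c) r) y :: 'a::zero_neq_one)"
  for x c y :: "'b::real_normed_vector"
proof -
  have "dist c (x - y) = dist (x - c) y"
    unfolding dist_norm by (metis minus_diff_eq diff_diff_eq2 norm_minus_commute add.commute)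
  thus ?thesis by (simp add: indicator_def)
qed

lemma convZ_eq_sum:
  assumes "finite G" and "\<And>k. k \<notin> G \<Longrightarrow> b k = 0"
  shows "convZ a b m = (\<Sum>j\<in>G. a (m - j) * b j)"
proof -
  have "convZ a b m = infsum (\<lambda>j. a (m - j) * b j) G"
    unfolding convZ_def by (rule infsum_cong_neutral) (use assms(2) in auto)
  thus ?thesis using assms(1) by simp
qed

lemma convZ_eq_double_sum:
  assumes "finite F" "finite G" and "\<And>k. k \<notin> F \<Longrightarrow> a k = 0" "\<And>k. k \<notin> G \<Longrightarrow> b k = 0"
  shows "convZ a b m = (\<Sum>k\<in>F. \<Sum>j\<in>G. if k + j = m then a k * b j else 0)"
proof -
  have "(\<Sum>k\<in>F. \<Sum>j\<in>G. if k + j = m then a k * b j else 0)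
      = (\<Sum>j\<in>G. \<Sum>k\<in>F. if k = m - j then a k * b j else 0)"
    by (subst sum.swap) (intro sum.cong refl, auto simp: algebra_simps)
  also have "\<dots> = (\<Sum>j\<in>G. a (m - j) * b j)"
    using assms(1,3) by (intro sum.cong refl) (auto simp: sum.delta')
  finally show ?thesis using convZ_eq_sum[OF assms(2,4)] by simp
qed

lemma convZ_eq_0_outside:
  assumes "finite F" "finite G" and "\<And>k. k \<notin> F \<Longrightarrow> a k = 0" "\<And>k. k \<notin> G \<Longrightarrow> b k = 0"
    and "m \<notin> (\<lambda>(k, j). k + j) ` (F \<times> G)"
  shows "convZ a b m = 0"
  using assms by (auto simp: convZ_eq_double_sum intro!: sum.neutral)

lemma convR_bump_eq:
  fixes a b :: "int^'n::finite \<Rightarrow> complex"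
  assumes F: "finite F" and G: "finite G"
  shows "convR (bump a F) (bump b G) x =
    (\<Sum>k\<in>F. \<Sum>j\<in>G. a k * b j * ball_overlap (x - lattice_centre 2 (k + j)))"
proof -
  define S where "S k j = ball (x - lattice_centre 1 k) (1/4) \<inter> ball (lattice_centre 1 j) (1/4)" for k j
  have integrand: "bump a F (x - y) * bump b G y =
      (\<Sum>k\<in>F. \<Sum>j\<in>G. a k * b j * complex_of_real (indicator (S k j) y))" for y
    unfolding bump_def sum_product
    by (intro sum.cong refl)
      (simp add: S_def indicator_ball_diff indicator_inter_arith mult_ac split: split_indicator)
  have S: "S k j \<in> sets lebesgue" "emeasure lebesgue (S k j) < \<infinity>" for k j
    using lmeasurable_open[of "S k j"] unfolding S_def by (auto simp: fmeasurable_def)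
  have integrable: "integrable lebesgue (\<lambda>y. a k * b j * complex_of_real (indicator (S k j) y))" for k j
    using S[of k j] by (intro integrable_mult_right) (simp add: complex_of_real_integrable_eq)
  have "S k j = (+) (lattice_centre 1 j) ` (ball 0 (1/4) \<inter> ball (x - lattice_centre 2 (k + j)) (1/4))" for k j
    unfolding S_def translation_Int image_add_ball
    by (simp add: lattice_centre_add[symmetric] algebra_simps Int_commute)
  hence measure_S: "measure lebesgue (S k j) = ball_overlap (x - lattice_centre 2 (k + j))" for k j
    by (simp add: measure_translation ball_overlap_def)
  have "convR (bump a F) (bump b G) x
      = (\<Sum>k\<in>F. \<Sum>j\<in>G. LINT y|lebesgue. a k * b j * complex_of_real (indicator (S k j) y))"
    unfolding convR_def integrand using integrable
    by (simp add: Bochner_Integration.integral_sum Bochner_Integration.integrable_sum)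
  thus ?thesis using S by (simp add: measure_S)
qed

lemma convR_bump_near_centre:
  fixes a b :: "int^'n::finite \<Rightarrow> complex"
  assumes F: "finite F" "finite G" and a0: "\<And>k. k \<notin> F \<Longrightarrow> a k = 0"
    and b0: "\<And>k. k \<notin> G \<Longrightarrow> b k = 0" and x: "dist x (lattice_centre 2 m) < 1/8"
  shows "convR (bump a F) (bump b G) x = convZ a b m * ball_overlap (x - lattice_centre 2 m)"
proof -
  have "a k * b j * ball_overlap (x - lattice_centre 2 (k + j))
      = (if k + j = m then a k * b j else 0) * ball_overlap (x - lattice_centre 2 m)" for k j
  proof (cases "k + j = m")
    case False
    have "1/2 \<le> norm (x - lattice_centre 2 (k + j))"
    proof (rule ccontr)
      assume "\<not> ?thesis"
      hence "dist (lattice_centre 2 m) (lattice_centre 2 (k + j)) < 3"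
        using x dist_triangle[of "lattice_centre 2 m" "lattice_centre 2 (k + j)" x]
        by (auto simp: dist_norm norm_minus_commute)
      thus False using lattice_centre_eq_if_dist_less False by blast
    qed
    thus ?thesis using False by (simp add: ball_overlap_eq_0)
  qed simp
  thus ?thesis
    by (simp add: convR_bump_eq[OF F] convZ_eq_double_sum[OF F a0 b0] sum_distrib_right)
qed

lemma norm_convZ_le_convR_bump:
  fixes a b :: "int^'n::finite \<Rightarrow> complex"
  assumes F: "finite F" "finite G" and a0: "\<And>k. k \<notin> F \<Longrightarrow> a k = 0"
    and b0: "\<And>k. k \<notin> G \<Longrightarrow> b k = 0" and x: "x \<in> ball (lattice_centre 2 m) (1/8)"
  shows "cmod (convZ a b m) * ball_vol TYPE('n) (1/8) \<le> cmod (convR (bump a F) (bump b G) x)"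
proof -
  have d: "dist x (lattice_centre 2 m) < 1/8" using x by (simp add: dist_commute)
  hence "ball_vol TYPE('n) (1/8) \<le> ball_overlap (x - lattice_centre 2 m)"
    by (intro ball_overlap_ge) (simp add: dist_norm)
  moreover have "0 \<le> ball_overlap (x - lattice_centre 2 m)" by (simp add: ball_overlap_def)
  ultimately show ?thesis
    by (simp add: convR_bump_near_centre[OF F a0 b0 d] norm_mult mult_left_mono)
qed

lemma weighted_convZ_le_weighted_convR_bump:
  fixes a b :: "int^'n::finite \<Rightarrow> complex"
  assumes F: "finite F" "finite G" and a0: "\<And>k. k \<notin> F \<Longrightarrow> a k = 0"
    and b0: "\<And>k. k \<notin> G \<Longrightarrow> b k = 0" and x: "x \<in> ball (lattice_centre 2 m) (1/8)"
  shows "ball_vol TYPE('n) (1/8) * 48 powr (-\<bar>s\<bar>) * (cmod (convZ a b m) * jbr m powr s)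
    \<le> cmod (convR (bump a F) (bump b G) x) * norm x powr s"
proof -
  have "48 powr (-\<bar>s\<bar>) * jbr m powr s \<le> norm x powr s"
    using norm_powr_near_lattice_centre[of 2 x m s] x by (simp add: dist_commute)
  with norm_convZ_le_convR_bump[OF F a0 b0 x]
  have "cmod (convZ a b m) * ball_vol TYPE('n) (1/8) * (48 powr (-\<bar>s\<bar>) * jbr m powr s)
      \<le> cmod (convR (bump a F) (bump b G) x) * norm x powr s"
    by (intro mult_mono) (auto intro: less_imp_le ball_vol_pos)
  thus ?thesis by (simp add: mult_ac)
qed

lemma lw_norm_convZ_le:
  fixes a b :: "int^'n::finite \<Rightarrow> complex"
  assumes F: "finite F" "finite G" and a0: "\<And>k. k \<notin> F \<Longrightarrow> a k = 0"
    and b0: "\<And>k. k \<notin> G \<Longrightarrow> b k = 0"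
    and q: "1 \<le> q" "q \<noteq> \<infinity>" and H: "in_Lw q s (convR (bump a F) (bump b G))"
  defines "qr \<equiv> real_of_ereal q"
  defines "\<kappa> \<equiv> ball_vol TYPE('n) (1/8) * 48 powr (-\<bar>s\<bar>)"
  shows "lw_norm q s (convZ a b)
    \<le> (\<kappa> powr qr * ball_vol TYPE('n) (1/8)) powr (- 1 / qr) * Lw_norm q s (convR (bump a F) (bump b G))"
proof -
  define H where "H = convR (bump a F) (bump b G)"
  define V where "V = ball_vol TYPE('n) (1/8)"
  define M where "M = (\<lambda>(k, j). k + j) ` (F \<times> G)"
  define L where "L = \<kappa> powr qr * V"
  have qr: "1 \<le> qr" using real_of_ereal_ge_1[OF q] by (simp add: qr_def)
  have V: "0 < V" by (simp add: V_def ball_vol_pos)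
  have "0 < \<kappa>" by (simp add: \<kappa>_def ball_vol_pos)
  hence L: "0 < L" using V by (simp add: L_def)
  have M: "finite M" using F by (simp add: M_def)
  have c0: "\<And>m. m \<notin> M \<Longrightarrow> convZ a b m = 0"
    unfolding M_def by (rule convZ_eq_0_outside[OF F a0 b0])
  have "ennreal (\<kappa> powr qr * lw_term q s (convZ a b) m) \<le> Lw_integrand q s H x"
    if "x \<in> ball (lattice_centre 2 m) (1/8)" for m x
  proof -
    have "(\<kappa> * (cmod (convZ a b m) * jbr m powr s)) powr qr \<le> (cmod (H x) * norm x powr s) powr qr"
      using weighted_convZ_le_weighted_convR_bump[OF F a0 b0 that, where s=s] qr V
      by (intro powr_mono2) (auto simp: \<kappa>_def V_def H_def)
    thus ?thesis using qr V jbr_pos[of m]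
      by (simp add: Lw_integrand_def lw_term_def \<kappa>_def powr_mult powr_powr qr_def mult_ac ennreal_leI)
  qed
  hence "(\<Sum>m\<in>M. ennreal (\<kappa> powr qr * lw_term q s (convZ a b) m) * emeasure lebesgue (ball (lattice_centre 2 m) (1/8)))
      \<le> (\<integral>\<^sup>+ x. Lw_integrand q s H x \<partial>lebesgue)"
    by (intro nn_integral_ge_sum_disjoint[OF M])
      (auto intro: lattice_centre_balls_disjoint[where r="1/8"])
  moreover have "(\<Sum>m\<in>M. ennreal (\<kappa> powr qr * lw_term q s (convZ a b) m) * emeasure lebesgue (ball (lattice_centre 2 m) (1/8)))
      = ennreal (L * (\<Sum>m\<in>M. lw_term q s (convZ a b) m))"
    using V by (simp add: emeasure_ball_vol L_def sum_distrib_left lw_term_nonneg mult_ac flip: V_def ennreal_mult sum_ennreal)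
  ultimately have sum_le: "(\<Sum>m\<in>M. lw_term q s (convZ a b) m) \<le> Lw_norm q s H powr qr / L"
    using H L qr unfolding qr_def
    by (subst pos_le_divide_eq[OF L], subst mult.commute, intro Lw_norm_powr_ge_if_nn_integral_ge)
      (auto simp: H_def lw_term_nonneg sum_nonneg)
  have "lw_norm q s (convZ a b) powr qr = (\<Sum>m\<in>M. lw_term q s (convZ a b) m)"
    using lw_norm_finite_support[OF M c0 q, where t=s] qr
    by (simp add: qr_def powr_powr sum_nonneg lw_term_nonneg)
  also note sum_le
  also have "Lw_norm q s H powr qr / L = (L powr (- 1 / qr) * Lw_norm q s H) powr qr"
  proof -
    have "(L powr (- 1 / qr)) powr qr = inverse L"
      using L qr by (subst powr_powr) (simp add: powr_minus)
    thus ?thesis using Lw_norm_nonneg[of q s H] by (simp add: powr_mult divide_inverse)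
  qed
  finally have "lw_norm q s (convZ a b) powr qr \<le> (L powr (- 1 / qr) * Lw_norm q s H) powr qr" .
  hence "lw_norm q s (convZ a b) \<le> L powr (- 1 / qr) * Lw_norm q s H"
    using qr lw_norm_nonneg[of q s "convZ a b"] Lw_norm_nonneg[of q s H]
    by (smt (verit) powr_less_mono2 powr_ge_zero mult_nonneg_nonneg)
  thus ?thesis by (simp add: L_def V_def H_def)
qed

lemma lw_norm_convZ_le_inf:
  fixes a b :: "int^'n::finite \<Rightarrow> complex"
  assumes F: "finite F" "finite G" and a0: "\<And>k. k \<notin> F \<Longrightarrow> a k = 0"
    and b0: "\<And>k. k \<notin> G \<Longrightarrow> b k = 0" and H: "in_Lw \<infinity> s (convR (bump a F) (bump b G))"
  shows "ball_vol TYPE('n) (1/8) * 48 powr (-\<bar>s\<bar>) * lw_norm \<infinity> s (convZ a b)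
    \<le> Lw_norm \<infinity> s (convR (bump a F) (bump b G))"
proof -
  define \<kappa> where "\<kappa> = ball_vol TYPE('n) (1/8) * 48 powr (-\<bar>s\<bar>)"
  have \<kappa>: "0 < \<kappa>" by (simp add: \<kappa>_def ball_vol_pos)
  have "\<kappa> * (cmod (convZ a b m) * jbr m powr s) \<le> Lw_norm \<infinity> s (convR (bump a F) (bump b G))" for m
    by (rule Lw_norm_inf_ge[OF H, of "ball (lattice_centre 2 m) (1/8)"])
      (auto simp: emeasure_ball_vol ball_vol_pos \<kappa>_def weighted_convZ_le_weighted_convR_bump[OF F a0 b0])
  hence "lw_sup s (convZ a b) \<le> ereal (Lw_norm \<infinity> s (convR (bump a F) (bump b G)) / \<kappa>)"
    unfolding lw_sup_def using \<kappa> by (intro SUP_least) (simp add: field_simps)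
  thus ?thesis using \<kappa> lw_sup_nonneg[of s "convZ a b"]
    by (cases "lw_sup s (convZ a b)") (auto simp: lw_norm_def \<kappa>_def field_simps)
qed

section \<open>Finitely supported sequences\<close>

lemma convZ_lw_norm_le_Lw_norm_convR_bump:
  assumes q: "1 \<le> q"
  shows "\<exists>\<Lambda>\<ge>0. \<forall>(a :: int^'n::finite \<Rightarrow> complex) b F. finite F \<longrightarrow> (\<forall>k. k \<notin> F \<longrightarrow> a k = 0) \<longrightarrow>
    (\<forall>k. k \<notin> F \<longrightarrow> b k = 0) \<longrightarrow> in_Lw q s (convR (bump a F) (bump b F)) \<longrightarrow>
    lw_norm q s (convZ a b) \<le> \<Lambda> * Lw_norm q s (convR (bump a F) (bump b F))"
proof -
  define \<kappa> where "\<kappa> = ball_vol TYPE('n) (1/8) * 48 powr (-\<bar>s\<bar>)"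
  have \<kappa>: "0 < \<kappa>" by (simp add: \<kappa>_def ball_vol_pos)
  show ?thesis
  proof (cases "q = \<infinity>")
    case True
    show ?thesis
      using True \<kappa> lw_norm_convZ_le_inf[where 'n='n and s=s]
      by (intro exI[of _ "1 / \<kappa>"]) (auto simp: \<kappa>_def field_simps)
  next
    case False
    show ?thesis
      using lw_norm_convZ_le[OF _ _ _ _ q False, where 'n='n and s=s]
      by (intro exI[of _ "(\<kappa> powr real_of_ereal q * ball_vol TYPE('n) (1/8)) powr (- 1 / real_of_ereal q)"])
        (auto simp: \<kappa>_def)
  qed
qed

lemma lw_norm_convZ_bound_finite_support:
  assumes incl: "convR_incl TYPE('n::finite) q1 s1 q2 s2 q s"
    and q: "1 \<le> q" and q1: "1 \<le> q1" and q2: "1 \<le> q2"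
  obtains D where "0 \<le> D" and "\<And>(a :: int^'n \<Rightarrow> complex) b F. finite F \<Longrightarrow> (\<And>k. k \<notin> F \<Longrightarrow> a k = 0) \<Longrightarrow>
    (\<And>k. k \<notin> F \<Longrightarrow> b k = 0) \<Longrightarrow> lw_norm q s (convZ a b) \<le> D * lw_norm q1 s1 a * lw_norm q2 s2 b"
proof -
  obtain C where C: "\<And>(f :: real^'n \<Rightarrow> complex) g. in_Lw q1 s1 f \<Longrightarrow> in_Lw q2 s2 g \<Longrightarrow>
      in_Lw q s (convR f g) \<and> Lw_norm q s (convR f g) \<le> C * Lw_norm q1 s1 f * Lw_norm q2 s2 g"
    using incl unfolding convR_incl_def by blast
  obtain U1 where U1: "0 \<le> U1" "\<And>(a :: int^'n \<Rightarrow> complex) F. finite F \<Longrightarrow> (\<forall>k. k \<notin> F \<longrightarrow> a k = 0) \<Longrightarrow>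
      in_Lw q1 s1 (bump a F) \<and> Lw_norm q1 s1 (bump a F) \<le> U1 * lw_norm q1 s1 a"
    using bump_Lw_norm_bound[OF q1, of s1] by blast
  obtain U2 where U2: "0 \<le> U2" "\<And>(a :: int^'n \<Rightarrow> complex) F. finite F \<Longrightarrow> (\<forall>k. k \<notin> F \<longrightarrow> a k = 0) \<Longrightarrow>
      in_Lw q2 s2 (bump a F) \<and> Lw_norm q2 s2 (bump a F) \<le> U2 * lw_norm q2 s2 a"
    using bump_Lw_norm_bound[OF q2, of s2] by blast
  obtain \<Lambda> where \<Lambda>: "0 \<le> \<Lambda>" "\<And>(a :: int^'n \<Rightarrow> complex) b F. finite F \<Longrightarrow> (\<forall>k. k \<notin> F \<longrightarrow> a k = 0) \<Longrightarrow>
      (\<forall>k. k \<notin> F \<longrightarrow> b k = 0) \<Longrightarrow> in_Lw q s (convR (bump a F) (bump b F)) \<Longrightarrow>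
      lw_norm q s (convZ a b) \<le> \<Lambda> * Lw_norm q s (convR (bump a F) (bump b F))"
    using convZ_lw_norm_le_Lw_norm_convR_bump[OF q, of s] by blast
  show ?thesis
  proof (rule that[of "\<Lambda> * max C 0 * U1 * U2"])
    show "0 \<le> \<Lambda> * max C 0 * U1 * U2" using \<Lambda> U1 U2 by simp
    fix a b :: "int^'n \<Rightarrow> complex" and F
    assume F: "finite F" "\<And>k. k \<notin> F \<Longrightarrow> a k = 0" "\<And>k. k \<notin> F \<Longrightarrow> b k = 0"
    define f where "f = bump a F"
    define g where "g = bump b F"
    have f: "in_Lw q1 s1 f" "Lw_norm q1 s1 f \<le> U1 * lw_norm q1 s1 a"
      using U1(2)[of F a] F by (auto simp: f_def)
    have g: "in_Lw q2 s2 g" "Lw_norm q2 s2 g \<le> U2 * lw_norm q2 s2 b"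
      using U2(2)[of F b] F by (auto simp: g_def)
    have "lw_norm q s (convZ a b) \<le> \<Lambda> * Lw_norm q s (convR f g)"
      using \<Lambda>(2)[of F a b] C[OF f(1) g(1)] F by (auto simp: f_def g_def)
    also have "\<dots> \<le> \<Lambda> * (max C 0 * Lw_norm q1 s1 f * Lw_norm q2 s2 g)"
    proof (rule mult_left_mono[OF _ \<Lambda>(1)])
      have "C * Lw_norm q1 s1 f * Lw_norm q2 s2 g \<le> max C 0 * Lw_norm q1 s1 f * Lw_norm q2 s2 g"
        using Lw_norm_nonneg[of q1 s1 f] Lw_norm_nonneg[of q2 s2 g] by (intro mult_right_mono) auto
      thus "Lw_norm q s (convR f g) \<le> max C 0 * Lw_norm q1 s1 f * Lw_norm q2 s2 g"
        using C[OF f(1) g(1)] by linarith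
    qed
    also have "\<dots> \<le> \<Lambda> * (max C 0 * (U1 * lw_norm q1 s1 a) * (U2 * lw_norm q2 s2 b))"
      using f(2) g(2) \<Lambda>(1) Lw_norm_nonneg[of q1 s1 f] Lw_norm_nonneg[of q2 s2 g]
      by (intro mult_left_mono mult_mono) auto
    finally show "lw_norm q s (convZ a b) \<le> \<Lambda> * max C 0 * U1 * U2 * lw_norm q1 s1 a * lw_norm q2 s2 b"
      by (simp add: mult_ac)
  qed
qed

section \<open>Truncation to boxes\<close>

definition int_box :: "nat \<Rightarrow> (int^'n::finite) set" where
  "int_box N = {k. \<forall>i. \<bar>k $ i\<bar> \<le> int N}"

lemma finite_int_box: "finite (int_box N :: (int^'n::finite) set)"
proof -
  define P where "P = PiE (UNIV :: 'n set) (\<lambda>_. {- int N..int N})"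
  have "int_box N \<subseteq> vec_nth -` P"
    by (auto simp: int_box_def P_def PiE_iff abs_le_iff) (metis minus_le_iff)
  moreover have "finite (vec_nth -` P :: (int^'n) set)"
    by (rule finite_vimageI) (auto simp: P_def inj_def vec_eq_iff intro: finite_PiE)
  ultimately show ?thesis by (rule finite_subset)
qed

lemma int_box_eventually_superset:
  assumes X: "finite (X :: (int^'n::finite) set)"
  shows "\<exists>N0. \<forall>N\<ge>N0. X \<subseteq> int_box N"
proof -
  define N0 where "N0 = nat (\<Sum>k\<in>X. \<Sum>i\<in>UNIV. \<bar>k $ i\<bar>)"
  have "\<bar>k $ i\<bar> \<le> int N0" if "k \<in> X" for k i
  proof -
    have "\<bar>k $ i\<bar> \<le> (\<Sum>i\<in>UNIV. \<bar>k $ i\<bar>)" by (rule member_le_sum) auto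
    also have "\<dots> \<le> (\<Sum>k\<in>X. \<Sum>i\<in>UNIV. \<bar>k $ i\<bar>)"
      by (rule member_le_sum[of k X "\<lambda>k. \<Sum>i\<in>UNIV. \<bar>k $ i\<bar>"]) (use that X in \<open>auto intro: sum_nonneg\<close>)
    also have "\<dots> \<le> int N0" by (simp add: N0_def)
    finally show ?thesis .
  qed
  hence "\<forall>N\<ge>N0. X \<subseteq> int_box N" by (auto simp: int_box_def) (meson of_nat_le_iff order_trans)
  thus ?thesis by blast
qed

definition conv_window :: "nat \<Rightarrow> int^'n::finite \<Rightarrow> (int^'n) set" where
  "conv_window N m = {j \<in> int_box N. m - j \<in> int_box N}"

lemma finite_conv_window: "finite (conv_window N m)"
  unfolding conv_window_def by (rule finite_subset[OF _ finite_int_box[of N]]) auto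

lemma conv_window_eventually_superset:
  assumes "finite X"
  shows "\<exists>N0. \<forall>N\<ge>N0. X \<subseteq> conv_window N m"
proof -
  obtain N0 where "\<forall>N\<ge>N0. X \<union> (\<lambda>j. m - j) ` X \<subseteq> int_box N"
    using int_box_eventually_superset[of "X \<union> (\<lambda>j. m - j) ` X"] assms by auto
  thus ?thesis by (intro exI[of _ N0]) (auto simp: conv_window_def)
qed

lemma tendsto_sum_conv_window_if_bounded:
  fixes f :: "int^'n::finite \<Rightarrow> real"
  assumes nonneg: "\<And>j. 0 \<le> f j" and bound: "\<And>N. sum f (conv_window N m) \<le> B"
  shows "f summable_on UNIV \<and> (\<lambda>N. sum f (conv_window N m)) \<longlonglongrightarrow> infsum f UNIV"
proof
  have "sum f J \<le> B" if J: "finite J" for J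
  proof -
    obtain N0 where "J \<subseteq> conv_window N0 m"
      using conv_window_eventually_superset[OF J] by blast
    hence "sum f J \<le> sum f (conv_window N0 m)"
      by (rule sum_mono2[OF finite_conv_window]) (simp add: nonneg)
    thus ?thesis using bound[of N0] by simp
  qed
  thus summable: "f summable_on UNIV"
    by (intro nonneg_bdd_above_summable_on) (auto intro!: bdd_aboveI[of _ B] nonneg)
  have "filterlim (\<lambda>N. conv_window N m) (finite_subsets_at_top UNIV) sequentially"
    unfolding filterlim_finite_subsets_at_top
  proof (intro allI impI)
    fix X :: "(int^'n) set" assume "finite X \<and> X \<subseteq> UNIV"
    then obtain N0 where "\<forall>N\<ge>N0. X \<subseteq> conv_window N m"
      using conv_window_eventually_superset by blast
    thus "\<forall>\<^sub>F N in sequentially. finite (conv_window N m) \<and> X \<subseteq> conv_window N m \<and> conv_window N m \<subseteq> UNIV"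
      by (auto simp: eventually_sequentially finite_conv_window)
  qed
  thus "(\<lambda>N. sum f (conv_window N m)) \<longlonglongrightarrow> infsum f UNIV"
    using has_sum_infsum[OF summable] unfolding has_sum_def by (rule filterlim_compose[rotated])
qed

definition box_trunc :: "(int^'n::finite \<Rightarrow> complex) \<Rightarrow> nat \<Rightarrow> int^'n \<Rightarrow> complex" where
  "box_trunc a N k = (if k \<in> int_box N then cmod (a k) else 0)"

lemma convZ_box_trunc:
  "convZ (box_trunc a N) (box_trunc b N) m
    = of_real (\<Sum>j\<in>conv_window N m. cmod (a (m - j)) * cmod (b j))"
proof -
  have "convZ (box_trunc a N) (box_trunc b N) m = (\<Sum>j\<in>int_box N. box_trunc a N (m - j) * box_trunc b N j)"
    by (rule convZ_eq_sum[OF finite_int_box]) (simp add: box_trunc_def)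
  also have "\<dots> = of_real (\<Sum>j\<in>int_box N. if m - j \<in> int_box N then cmod (a (m - j)) * cmod (b j) else 0)"
    by (auto simp: box_trunc_def intro!: sum.cong)
  finally show ?thesis
    unfolding conv_window_def by (simp add: sum.inter_filter[OF finite_int_box])
qed

lemma convZ_incl_if_finite_support_bound:
  assumes q: "1 \<le> q" and q1: "1 \<le> q1" and q2: "1 \<le> q2" and D: "0 \<le> D"
    and bound: "\<And>(a :: int^'n::finite \<Rightarrow> complex) b F. finite F \<Longrightarrow> (\<And>k. k \<notin> F \<Longrightarrow> a k = 0) \<Longrightarrow>
      (\<And>k. k \<notin> F \<Longrightarrow> b k = 0) \<Longrightarrow> lw_norm q s (convZ a b) \<le> D * lw_norm q1 s1 a * lw_norm q2 s2 b"
  shows "convZ_incl TYPE('n) q1 s1 q2 s2 q s"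
  unfolding convZ_incl_def
proof (intro exI[of _ D] allI impI)
  fix a b :: "int^'n \<Rightarrow> complex"
  assume a: "in_lw q1 s1 a" and b: "in_lw q2 s2 b"
  define R where "R = D * lw_norm q1 s1 a * lw_norm q2 s2 b"
  define c where "c N = convZ (box_trunc a N) (box_trunc b N)" for N
  define f where "f m j = cmod (a (m - j)) * cmod (b j)" for m j
  have f: "0 \<le> f m j" for m j by (simp add: f_def)
  have trunc_0: "k \<notin> int_box N \<Longrightarrow> box_trunc x N k = 0" for x N k by (simp add: box_trunc_def)
  have trunc_le: "cmod (box_trunc x N k) \<le> cmod (x k)" for x N k by (simp add: box_trunc_def)
  have c_in: "in_lw q s (c N)" for N
    unfolding c_def
    by (rule in_lw_finite_support[OF _ convZ_eq_0_outside[OF finite_int_box finite_int_box trunc_0 trunc_0] q])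
      (auto intro: finite_int_box)
  have c_bound: "lw_norm q s (c N) \<le> R" for N
  proof -
    have "lw_norm q s (c N) \<le> D * lw_norm q1 s1 (box_trunc a N) * lw_norm q2 s2 (box_trunc b N)"
      unfolding c_def by (rule bound[OF finite_int_box trunc_0 trunc_0])
    also have "\<dots> \<le> R"
      unfolding R_def using lw_norm_dominated[OF q1 a trunc_le[of a N]] lw_norm_dominated[OF q2 b trunc_le[of b N]] D
      by (intro mult_mono mult_left_mono) (auto simp: lw_norm_nonneg)
    finally show ?thesis .
  qed
  have c_eq: "cmod (c N m) = sum (f m) (conv_window N m)" for N m
    unfolding c_def convZ_box_trunc norm_of_real f_def by (intro abs_of_nonneg sum_nonneg) auto
  text \<open>The weighted bound on each \<open>c N\<close> bounds the partial sums of the absolute convolution series.\<close>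
  have "sum (f m) (conv_window N m) \<le> R / jbr m powr s" for N m
    using lw_weight_le_lw_norm[OF q c_in, of N m] c_bound[of N] jbr_pos[of m]
    by (simp add: c_eq field_simps)
  hence "f m summable_on UNIV \<and> (\<lambda>N. sum (f m) (conv_window N m)) \<longlonglongrightarrow> infsum (f m) UNIV" for m
    by (intro tendsto_sum_conv_window_if_bounded f)
  hence summable: "f m summable_on UNIV"
    and lim: "(\<lambda>N. cmod (c N m)) \<longlonglongrightarrow> cmod (complex_of_real (infsum (f m) UNIV))" for m
    by (auto simp: c_eq infsum_nonneg f)
  have T: "in_lw q s (\<lambda>m. complex_of_real (infsum (f m) UNIV))
      \<and> lw_norm q s (\<lambda>m. complex_of_real (infsum (f m) UNIV)) \<le> R"
    by (rule lw_norm_le_if_tendsto[OF q c_in c_bound lim])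
  have abs_summable: "(\<lambda>j. norm (a (m - j) * b j)) summable_on UNIV" for m
    using summable[of m] by (simp add: f_def[abs_def] norm_mult)
  have "cmod (convZ a b m) \<le> cmod (complex_of_real (infsum (f m) UNIV))" for m
    using norm_infsum_bound[OF abs_summable[of m]]
    by (simp add: convZ_def f_def[abs_def] norm_mult infsum_nonneg)
  with T have "in_lw q s (convZ a b) \<and> lw_norm q s (convZ a b) \<le> R"
    using lw_norm_dominated[OF q] order_trans by blast
  moreover have "convZ_defined a b"
    unfolding convZ_defined_def using abs_summable by (blast intro: abs_summable_summable)
  ultimately show "convZ_defined a b \<and> in_lw q s (convZ a b) \<and>
      lw_norm q s (convZ a b) \<le> D * lw_norm q1 s1 a * lw_norm q2 s2 b"
    by (simp add: R_def)
qed

theorem proposition3p2: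
  fixes q q1 q2 :: ereal and s s1 s2 :: real
  assumes "1 \<le> q" and "1 \<le> q1" and "1 \<le> q2"
    and "convR_incl TYPE('n::finite) q1 s1 q2 s2 q s"
  shows "convZ_incl TYPE('n) q1 s1 q2 s2 q s"
proof -
  obtain D where "0 \<le> D" and "\<And>(a :: int^'n \<Rightarrow> complex) b F. finite F \<Longrightarrow> (\<And>k. k \<notin> F \<Longrightarrow> a k = 0) \<Longrightarrow>
      (\<And>k. k \<notin> F \<Longrightarrow> b k = 0) \<Longrightarrow> lw_norm q s (convZ a b) \<le> D * lw_norm q1 s1 a * lw_norm q2 s2 b"
    using lw_norm_convZ_bound_finite_support[OF assms(4,1,2,3)] by blast
  thus ?thesis by (rule convZ_incl_if_finite_support_bound[OF assms(1-3)])
qed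

end
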